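(* Let $S\subset\mathbb{R}^p$ be a compact set with $\mathrm{cl}(\mathrm{int}(S))=S$ and let $\mu_S$ be the uniform probability measure on $S$. Let $\delta>0$ and $\mathbf{x}\in S$ with $\mathrm{dist}(\mathbf{x},\partial S)\ge\delta$. Then for every $d\in\mathbb{N}$, \[s(d)\,\Lambda_{\mu_S,d}(\mathbf{x})\ge\frac{\delta^p\,\omega_p}{\lambda(S)}\,\frac{(d+1)(d+2)(d+3)}{(d+p+1)(d+p+2)(2d+p+6)}.\]
   Context: $\lambda$ is Lebesgue measure, $\mu_S=\lambda_S/\lambda(S)$ with $\lambda_S$ the restriction of $\lambda$ to $S$; $\partial S$ is the topological boundary of $S$; $s(d)=\binom{p+d}{d}$; $\omega_p=\frac{2\pi^{(p+1)/2}}{\Gamma((p+1)/2)}$. For a finite Borel measure $\nu$ with finite moments, $\Lambda_{\nu,d}(\xi)=\min\{\int P^2\,d\nu: P\in\mathbb{R}[X]_d,\ P(\xi)=1\}$, where $\mathbb{R}[X]_d$ is the space of real polynomials in $p$ variables of total degree at most $d$. *)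

theory Defs
  imports "HOL-Analysis.Analysis"
begin

definition multi_idx :: "nat \<Rightarrow> ('n::finite \<Rightarrow> nat) set" where
  "multi_idx d = {\<alpha>. (\<Sum>i\<in>UNIV. \<alpha> i) \<le> d}"

definition polys_deg :: "nat \<Rightarrow> (real^'n::finite \<Rightarrow> real) set" where
  "polys_deg d = {P. \<exists>c :: ('n \<Rightarrow> nat) \<Rightarrow> real.
      P = (\<lambda>x. \<Sum>\<alpha>\<in>multi_idx d. c \<alpha> * (\<Prod>i\<in>UNIV. (x $ i) ^ \<alpha> i))}"

text \<open>Christoffel function of a measure nu at xi (the minimum is written as an infimum).\<close>
definition christoffel :: "(real^'n::finite) measure \<Rightarrow> nat \<Rightarrow> real^'n \<Rightarrow> real" where
  "christoffel \<nu> d \<xi> = Inf {(\<integral>x. (P x)^2 \<partial>\<nu>) | P. P \<in> polys_deg d \<and> P \<xi> = 1}"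

definition omega :: "nat \<Rightarrow> real" where
  "omega p = 2 * pi powr ((real p + 1) / 2) / Gamma ((real p + 1) / 2)"

end

theory Submission
  imports Defs "HOL-Computational_Algebra.Polynomial"
begin

text \<open>
  Since \<open>dist(x, \<partial>S) \<ge> \<delta>\<close>, the ball \<open>B(x, \<delta>)\<close> lies in \<open>S\<close>; hence for a polynomial \<open>P\<close> with
  \<open>P(x) = 1\<close>, \<open>\<integral> P\<^sup>2 d\<mu>\<^sub>S\<close> is at least \<open>\<delta>\<^sup>p / \<lambda>(S)\<close> times the integral of \<open>P(x + \<delta>z)\<^sup>2\<close> over the unit
  ball \<open>B\<close>. On \<open>B\<close> the radial polynomial \<open>K(z) = \<Sum>\<^sub>j c\<^sub>j |z|\<^sup>2\<^sup>j\<close> (\<open>j \<le> m = \<lfloor>d/2\<rfloor>\<close>) reproduces the value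
  at \<open>0\<close> of every polynomial of degree \<open>\<le> 2m + 1\<close>: odd monomials integrate to zero, and for even
  ones polar integration turns the reproducing property into the linear system
  \<open>\<Sum>\<^sub>j c\<^sub>j (q + i)/(q + i + j) = [i = 0]\<close> with \<open>q = p/2\<close>, which finite differences solve explicitly.
  Expanding \<open>0 \<le> \<integral>\<^sub>B (F - K/K(0))\<^sup>2\<close> gives \<open>\<integral>\<^sub>B F\<^sup>2 \<ge> 1/K(0) = vol(B) (m! / (p/2 + 1)\<^sub>m)\<^sup>2\<close>.
  Finally, \<open>s(d) vol(B) (m! / (p/2 + 1)\<^sub>m)\<^sup>2\<close> dominates the claimed bound: both change by explicit
  factors when \<open>p\<close> grows by \<open>2\<close>, so induction from \<open>p = 1\<close> (log-convexity of \<open>\<Gamma>\<close>) and \<open>p = 2\<close>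
  suffices.
\<close>

section \<open>Finite differences\<close>

definition fin_diff :: "nat \<Rightarrow> (nat \<Rightarrow> real) \<Rightarrow> real" where
  "fin_diff m f = (\<Sum>j\<le>m. (-1)^j * real (m choose j) * f j)"

lemma fin_diff_Suc: "fin_diff (Suc m) f = fin_diff m f - fin_diff m (\<lambda>j. f (Suc j))"
proof -
  let ?g = "\<lambda>i. (-1)^(Suc i) * real (m choose Suc i) * f (Suc i)"
  have "fin_diff (Suc m) f = f 0 + (\<Sum>i\<le>m. (-1)^(Suc i) * real (Suc m choose Suc i) * f (Suc i))"
    unfolding fin_diff_def by (subst sum.atMost_Suc_shift) simp
  also have "(\<Sum>i\<le>m. (-1)^(Suc i) * real (Suc m choose Suc i) * f (Suc i))
      = (\<Sum>i\<le>m. ?g i) - fin_diff m (\<lambda>j. f (Suc j))"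
    unfolding fin_diff_def sum_subtractf[symmetric]
    by (rule sum.cong) (simp_all add: algebra_simps)
  also have "f 0 + ((\<Sum>i\<le>m. ?g i) - fin_diff m (\<lambda>j. f (Suc j)))
      = (\<Sum>j\<le>Suc m. (-1)^j * real (m choose j) * f j) - fin_diff m (\<lambda>j. f (Suc j))"
    by (subst sum.atMost_Suc_shift) simp
  finally show ?thesis by (simp add: fin_diff_def)
qed

lemma fin_diff_add: "fin_diff m (\<lambda>j. f j + g j) = fin_diff m f + fin_diff m g"
  unfolding fin_diff_def by (simp add: sum.distrib algebra_simps)

lemma fin_diff_diff: "fin_diff m (\<lambda>j. f j - g j) = fin_diff m f - fin_diff m g"
  unfolding fin_diff_def by (simp add: sum_subtractf[symmetric] algebra_simps)

lemma fin_diff_cmult: "fin_diff m (\<lambda>j. c * f j) = c * fin_diff m f"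
  unfolding fin_diff_def by (simp add: sum_distrib_left algebra_simps)

lemma degree_diff_pcompose_shift_less:
  fixes P :: "'a::idom poly"
  assumes "degree P > 0"
  shows "degree (P - pcompose P [:1, 1:]) < degree P"
proof -
  let ?Q = "pcompose P [:1, 1:]"
  have "degree ?Q = degree P" "lead_coeff ?Q = lead_coeff P"
    by (simp add: degree_pcompose, simp add: lead_coeff_comp)
  then have "coeff (P - ?Q) k = 0" if "k \<ge> degree P" for k
    using that by (cases "k = degree P") (simp_all add: coeff_eq_0)
  then have "degree (P - ?Q) \<le> degree P - 1"
    using assms by (intro degree_le) auto
  then show ?thesis using assms by simp
qed

lemma fin_diff_poly_eq_0: "degree (P :: real poly) < m \<Longrightarrow> fin_diff m (\<lambda>j. poly P (real j)) = 0"
proof (induction m arbitrary: P)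
  case 0 then show ?case by simp
next
  case (Suc m)
  show ?case
  proof (cases "degree P = 0")
    case True
    then obtain c where "P = [:c:]" by (metis degree_eq_zeroE)
    then show ?thesis using fin_diff_Suc[of m "\<lambda>_. c"] by simp
  next
    case False
    let ?Q = "P - pcompose P [:1, 1:]"
    have "degree ?Q < m"
      using degree_diff_pcompose_shift_less[of P] False Suc.prems by simp
    have "fin_diff (Suc m) (\<lambda>j. poly P (real j)) = fin_diff m (\<lambda>j. poly ?Q (real j))"
      by (simp add: fin_diff_Suc fin_diff_diff poly_pcompose add.commute)
    also have "\<dots> = 0" using Suc.IH \<open>degree ?Q < m\<close> by blast
    finally show ?thesis .
  qed
qed

lemma fin_diff_inverse:
  assumes "z > 0"
  shows "fin_diff m (\<lambda>j. 1 / (z + real j)) = fact m / pochhammer z (Suc m)"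
  using assms
proof (induction m arbitrary: z)
  case 0 then show ?case by (simp add: fin_diff_def)
next
  case (Suc m)
  let ?P = "pochhammer z (Suc (Suc m))"
  have "fin_diff (Suc m) (\<lambda>j. 1 / (z + real j))
      = fact m / pochhammer z (Suc m) - fact m / pochhammer (z + 1) (Suc m)"
    using Suc.IH[of z] Suc.IH[of "z + 1"] Suc.prems by (simp add: fin_diff_Suc add_ac)
  also have "fact m / pochhammer z (Suc m) = fact m * (z + real (Suc m)) / ?P"
    using Suc.prems by (simp add: pochhammer_Suc pochhammer_eq_0_iff)
  also have "fact m / pochhammer (z + 1) (Suc m) = fact m * z / ?P"
    using Suc.prems by (simp add: pochhammer_rec)
  also have "fact m * (z + real (Suc m)) / ?P - fact m * z / ?P = fact (Suc m) / ?P"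
    by (simp add: diff_divide_distrib[symmetric] algebra_simps)
  finally show ?case .
qed

lemma fin_diff_poly_over_linear:
  fixes R :: "real poly"
  assumes "degree R \<le> m" "z > 0"
  shows "fin_diff m (\<lambda>j. poly R (real j) / (z + real j)) = fact m * poly R (-z) / pochhammer z (Suc m)"
proof -
  define Q where "Q = synthetic_div R (-z)"
  have R: "R = [:z, 1:] * Q + [:poly R (-z):]"
    using synthetic_div_correct'[of "-z" R] by (simp add: Q_def)
  have split: "poly R (real j) / (z + real j) = poly Q (real j) + poly R (-z) * (1 / (z + real j))" for j
  proof -
    have "poly R (real j) = (z + real j) * poly Q (real j) + poly R (-z)"
      by (subst R) (simp add: algebra_simps)
    moreover have "z + real j > 0" using assms by simp
    ultimately show ?thesis by (simp add: field_simps)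
  qed
  have "fin_diff m (\<lambda>j. poly Q (real j)) = 0"
  proof (cases "m = 0")
    case True
    then have "Q = 0" using assms by (simp add: Q_def synthetic_div_eq_0_iff)
    then show ?thesis by (simp add: fin_diff_def)
  next
    case False
    then show ?thesis
      using assms by (intro fin_diff_poly_eq_0) (simp add: Q_def degree_synthetic_div)
  qed
  then show ?thesis
    unfolding split fin_diff_add fin_diff_cmult using fin_diff_inverse[OF assms(2)] by simp
qed

definition kernel_coeff :: "real \<Rightarrow> nat \<Rightarrow> nat \<Rightarrow> real" where
  "kernel_coeff q m j =
     (-1)^j * real (m choose j) * pochhammer (q + 1) m * pochhammer (q + real j + 1) m / (fact m)^2"

lemma kernel_coeff_0: "kernel_coeff q m 0 = (pochhammer (q + 1) m / fact m)^2"
  by (simp add: kernel_coeff_def power2_eq_square)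

text \<open>The sum is a finite difference of a rational function of \<open>j\<close> whose numerator
  \<open>\<Prod>l<m. x + q + 1 + l\<close> vanishes at \<open>x = -(q + i)\<close> for \<open>1 \<le> i \<le> m\<close>.\<close>
lemma kernel_coeff_sum:
  assumes q: "q > 0" and i: "i \<le> m"
  shows "(\<Sum>j\<le>m. kernel_coeff q m j * ((q + real i) / (q + real i + real j)))
           = (if i = 0 then 1 else 0)"
proof -
  define R where "R = (\<Prod>l<m. [:q + 1 + real l, 1:])"
  have poly_R: "poly R x = (\<Prod>l<m. q + 1 + real l + x)" for x
    by (simp add: R_def poly_prod)
  have deg_R: "degree R \<le> m"
    using degree_prod_sum_le[of "{..<m}" "\<lambda>l. [:q + 1 + real l, 1:]"] by (simp add: R_def o_def)
  have "(\<Sum>j\<le>m. kernel_coeff q m j * ((q + real i) / (q + real i + real j)))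
      = (q + real i) * pochhammer (q + 1) m / (fact m)^2
        * fin_diff m (\<lambda>j. poly R (real j) / (q + real i + real j))"
    by (simp add: fin_diff_def kernel_coeff_def poly_R pochhammer_prod lessThan_atLeast0
        sum_distrib_left algebra_simps)
  also have "\<dots> = (q + real i) * pochhammer (q + 1) m / (fact m)^2
        * (fact m * poly R (-(q + real i)) / pochhammer (q + real i) (Suc m))"
    using q by (simp add: fin_diff_poly_over_linear deg_R)
  also have "\<dots> = (if i = 0 then 1 else 0)"
  proof (cases "i = 0")
    case True
    have "poly R (-q) = fact m"
      by (simp add: poly_R fact_prod_Suc prod.atLeast0_lessThan_Suc_shift[symmetric]
          lessThan_atLeast0 pochhammer_fact)
    moreover have "pochhammer q (Suc m) = q * pochhammer (q + 1) m"
      by (simp add: pochhammer_rec)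
    moreover have "pochhammer (q + 1) m > 0"
      using q by (intro pochhammer_pos) simp
    ultimately show ?thesis using True q by (simp add: power2_eq_square)
  next
    case False
    have "poly R (-(q + real i)) = (\<Prod>l<m. 1 + real l - real i)"
      by (simp add: poly_R algebra_simps)
    also have "\<dots> = 0"
      using False i by (intro prod_zero) (auto intro!: bexI[of _ "i - 1"])
    finally show ?thesis using False by simp
  qed
  finally show ?thesis .
qed

section \<open>Polynomial functions\<close>

definition monomial :: "('n::finite \<Rightarrow> nat) \<Rightarrow> real^'n \<Rightarrow> real" where
  "monomial \<alpha> z = (\<Prod>i\<in>UNIV. (z $ i) ^ \<alpha> i)"

definition total_degree :: "('n::finite \<Rightarrow> nat) \<Rightarrow> nat" where
  "total_degree \<alpha> = (\<Sum>i\<in>UNIV. \<alpha> i)"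

lemma monomial_add: "monomial (\<lambda>i. \<alpha> i + \<beta> i) z = monomial \<alpha> z * monomial \<beta> z"
  by (simp add: monomial_def power_add prod.distrib)

lemma total_degree_add: "total_degree (\<lambda>i. \<alpha> i + \<beta> i) = total_degree \<alpha> + total_degree \<beta>"
  by (simp add: total_degree_def sum.distrib)

lemma total_degree_eq_0_iff: "total_degree \<alpha> = 0 \<longleftrightarrow> \<alpha> = (\<lambda>_. 0)"
  by (auto simp: total_degree_def fun_eq_iff)

lemma monomial_scaleR: "monomial \<alpha> (c *\<^sub>R z) = c ^ total_degree \<alpha> * monomial \<alpha> z"
  by (simp add: monomial_def total_degree_def power_mult_distrib prod.distrib power_sum)

lemma monomial_at_0: "monomial \<alpha> 0 = (if \<alpha> = (\<lambda>_. 0) then 1 else 0)"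
  by (auto simp: monomial_def fun_eq_iff intro: prod_zero)

lemma continuous_on_monomial [continuous_intros]:
  "continuous_on S f \<Longrightarrow> continuous_on S (\<lambda>x. monomial \<alpha> (f x))"
  unfolding monomial_def by (intro continuous_intros)

text \<open>An inductive counterpart of \<open>polys_deg\<close>, so that closure properties follow by rule induction.\<close>
inductive poly_fun :: "nat \<Rightarrow> (real^'n::finite \<Rightarrow> real) \<Rightarrow> bool" for d where
  monomial: "total_degree \<alpha> \<le> d \<Longrightarrow> poly_fun d (\<lambda>z. c * monomial \<alpha> z)"
| add: "poly_fun d F \<Longrightarrow> poly_fun d G \<Longrightarrow> poly_fun d (\<lambda>z. F z + G z)"

lemma continuous_on_poly_fun: "poly_fun d F \<Longrightarrow> continuous_on S F"
  by (induction rule: poly_fun.induct) (intro continuous_intros)+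

lemma poly_fun_const: "poly_fun d (\<lambda>_. c)"
  using poly_fun.monomial[of "\<lambda>_. 0" d c] by (simp add: total_degree_def monomial_def)

lemma poly_fun_mono: "poly_fun d F \<Longrightarrow> d \<le> e \<Longrightarrow> poly_fun e F"
  by (induction rule: poly_fun.induct) (auto intro: poly_fun.intros)

lemma poly_fun_cmult: "poly_fun d F \<Longrightarrow> poly_fun d (\<lambda>z. c * F z)"
proof (induction rule: poly_fun.induct)
  case (monomial \<alpha> a)
  then show ?case using poly_fun.monomial[of \<alpha> d "c * a"] by (simp add: mult.assoc)
next
  case (add F G)
  then show ?case using poly_fun.add by (simp add: distrib_left)
qed

lemma poly_fun_mult_monomial:
  assumes "poly_fun b G" "total_degree \<alpha> \<le> a"
  shows "poly_fun (a + b) (\<lambda>z. c * monomial \<alpha> z * G z)"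
  using assms(1)
proof (induction rule: poly_fun.induct)
  case (monomial \<beta> c')
  then have "total_degree (\<lambda>i. \<alpha> i + \<beta> i) \<le> a + b"
    using assms(2) by (simp add: total_degree_add)
  then show ?case
    using poly_fun.monomial[of "\<lambda>i. \<alpha> i + \<beta> i" "a + b" "c * c'"] by (simp add: monomial_add mult_ac)
next
  case (add F G)
  then show ?case using poly_fun.add by (simp add: distrib_left)
qed

lemma poly_fun_mult: "poly_fun a F \<Longrightarrow> poly_fun b G \<Longrightarrow> poly_fun (a + b) (\<lambda>z. F z * G z)"
proof (induction rule: poly_fun.induct)
  case (monomial \<alpha> c)
  show ?case by (rule poly_fun_mult_monomial[OF monomial.prems monomial.hyps])
next
  case (add F G')
  then show ?case using poly_fun.add by (simp add: distrib_right)
qed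

lemma poly_fun_power: "poly_fun a F \<Longrightarrow> poly_fun (a * n) (\<lambda>z. F z ^ n)"
  by (induction n) (simp_all add: poly_fun_const poly_fun_mult)

lemma poly_fun_sum: "(\<And>i. i \<in> A \<Longrightarrow> poly_fun d (F i)) \<Longrightarrow> poly_fun d (\<lambda>z. \<Sum>i\<in>A. F i z)"
  by (induction A rule: infinite_finite_induct) (simp_all add: poly_fun_const poly_fun.add)

lemma poly_fun_prod:
  "(\<And>i. i \<in> A \<Longrightarrow> poly_fun (e i) (F i)) \<Longrightarrow> poly_fun (\<Sum>i\<in>A. e i) (\<lambda>z. \<Prod>i\<in>A. F i z)"
  by (induction A rule: infinite_finite_induct) (simp_all add: poly_fun_const poly_fun_mult)

lemma poly_fun_component: "poly_fun 1 (\<lambda>z::real^'n::finite. z $ i)"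
proof -
  let ?\<alpha> = "\<lambda>k. if k = i then 1 else 0"
  have "monomial ?\<alpha> z = z $ i" for z :: "real^'n"
    by (simp add: monomial_def if_distrib prod.If_cases)
  moreover have "total_degree ?\<alpha> = 1"
    by (simp add: total_degree_def)
  ultimately show ?thesis using poly_fun.monomial[of ?\<alpha> 1 1] by simp
qed

lemma poly_fun_norm_power: "poly_fun (2 * j) (\<lambda>z::real^'n::finite. norm z ^ (2 * j))"
proof -
  have "poly_fun 2 (\<lambda>z::real^'n. (z $ i)^2)" for i
    using poly_fun_power[OF poly_fun_component[of i], of 2] by simp
  then have "poly_fun 2 (\<lambda>z::real^'n. \<Sum>i\<in>UNIV. (z $ i)^2)"
    by (rule poly_fun_sum)
  moreover have "norm z ^ (2 * j) = (\<Sum>i\<in>UNIV. (z $ i)^2)^j" for z :: "real^'n"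
    by (simp add: power_mult norm_vec_def L2_set_def sum_nonneg)
  ultimately show ?thesis
    using poly_fun_power[of 2 _ j] by simp
qed

lemma poly_fun_compose_affine:
  assumes "P \<in> polys_deg d"
  shows "poly_fun d (\<lambda>z::real^'n::finite. P (x + \<delta> *\<^sub>R z))"
proof -
  obtain c where P: "P = (\<lambda>x. \<Sum>\<alpha>\<in>multi_idx d. c \<alpha> * (\<Prod>i\<in>UNIV. (x $ i) ^ \<alpha> i))"
    using assms unfolding polys_deg_def by blast
  have affine: "poly_fun 1 (\<lambda>z::real^'n. x $ i + \<delta> * z $ i)" for i
    using poly_fun.add[OF poly_fun_const poly_fun_cmult[OF poly_fun_component]] .
  have "poly_fun d (\<lambda>z::real^'n. \<Prod>i\<in>UNIV. (x $ i + \<delta> * z $ i) ^ \<alpha> i)" if "\<alpha> \<in> multi_idx d" for \<alpha>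
  proof (rule poly_fun_mono)
    show "poly_fun (\<Sum>i\<in>UNIV. 1 * \<alpha> i) (\<lambda>z::real^'n. \<Prod>i\<in>UNIV. (x $ i + \<delta> * z $ i) ^ \<alpha> i)"
      by (intro poly_fun_prod poly_fun_power affine)
  qed (use that in \<open>simp add: multi_idx_def\<close>)
  then show ?thesis
    unfolding P by (auto intro!: poly_fun_sum poly_fun_cmult)
qed

section \<open>Moments of the unit ball\<close>

lemma lborel_integral_affine:
  fixes f :: "'a::euclidean_space \<Rightarrow> real"
  assumes [measurable]: "f \<in> borel_measurable borel" and "c \<noteq> 0"
  shows "integral\<^sup>L lborel f = \<bar>c\<bar> ^ DIM('a) * (\<integral>x. f (t + c *\<^sub>R x) \<partial>lborel)"
  by (subst lborel_affine[OF \<open>c \<noteq> 0\<close>, of t]) (simp add: integral_density integral_distr)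

lemma integrable_indicator_cball:
  fixes f :: "'a::euclidean_space \<Rightarrow> real"
  assumes "continuous_on (cball c r) f"
  shows "integrable lborel (\<lambda>x. indicator (cball c r) x * f x)"
  using borel_integrable_compact[OF compact_cball assms] by simp

lemma cball_in_borel [measurable]: "cball c r \<in> sets borel"
  by (simp add: borel_closed)

lemma borel_measurable_monomial [measurable]: "monomial \<alpha> \<in> borel_measurable borel"
  by (intro borel_measurable_continuous_onI continuous_on_monomial continuous_on_id)

definition ball_moment :: "('n::finite \<Rightarrow> nat) \<Rightarrow> real" where
  "ball_moment \<alpha> = (\<integral>x. indicator (cball 0 1) x * monomial \<alpha> x \<partial>lborel)"

lemma ball_moment_0: "ball_moment (\<lambda>_::'n::finite. 0) = unit_ball_vol (real CARD('n))"
  by (simp add: ball_moment_def monomial_def measure_def emeasure_cball)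

lemma integral_cball_monomial:
  fixes \<alpha> :: "'n::finite \<Rightarrow> nat"
  assumes "s > 0"
  shows "(\<integral>x. indicator (cball 0 s) x * monomial \<alpha> x \<partial>lborel)
           = s ^ (total_degree \<alpha> + CARD('n)) * ball_moment \<alpha>"
proof -
  have "indicator (cball 0 s) (s *\<^sub>R z) = (indicator (cball 0 1) z :: real)" for z :: "real^'n"
    using assms by (simp add: indicator_def)
  then have "(\<integral>x. indicator (cball 0 s) x * monomial \<alpha> x \<partial>lborel)
      = s ^ CARD('n) * (\<integral>z. s ^ total_degree \<alpha> * (indicator (cball 0 1) z * monomial \<alpha> z) \<partial>lborel)"
    using assms
    by (subst lborel_integral_affine[where c = s and t = 0]) (simp_all add: monomial_scaleR mult_ac)
  then show ?thesis by (simp add: ball_moment_def power_add)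
qed

lemma ball_moment_odd:
  assumes "odd (total_degree \<alpha>)"
  shows "ball_moment \<alpha> = 0"
proof -
  have "indicator (cball 0 1) (- z) = (indicator (cball 0 1) z :: real)" for z :: "real^'a"
    by (simp add: indicator_def)
  moreover have "monomial \<alpha> (- z) = - monomial \<alpha> z" for z
    using monomial_scaleR[of \<alpha> "-1" z] assms by simp
  ultimately have "ball_moment \<alpha> = - ball_moment \<alpha>"
    unfolding ball_moment_def by (subst lborel_integral_affine[where c = "-1" and t = 0]) simp_all
  then show ?thesis by simp
qed

lemma integral_cball_layers:
  fixes f :: "'a::euclidean_space \<Rightarrow> real"
  assumes f: "continuous_on (cball 0 1) f" and "k > 0"
  shows "(\<integral>s. indicator {0..1} s * (real k * s ^ (k - 1))
              * (\<integral>x. indicator (cball 0 s) x * f x \<partial>lborel) \<partial>lborel)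
       = (\<integral>x. indicator (cball 0 1) x * f x * (1 - norm x ^ k) \<partial>lborel)"
proof -
  define h where "h x s = indicator {0..1} s * indicator (cball 0 s) x * f x * (real k * s ^ (k - 1))"
    for x :: 'a and s :: real
  define K where "K = (cball (0::'a) 1 \<times> {0..1::real}) \<inter> {z. norm (fst z) \<le> snd z}"
  have "compact K"
    unfolding K_def by (intro compact_Int_closed compact_Times compact_cball compact_Icc
        closed_Collect_le continuous_intros)
  moreover have "continuous_on K (\<lambda>z. f (fst z) * (real k * snd z ^ (k - 1)))"
    unfolding K_def by (intro continuous_intros continuous_on_compose2[OF f]) auto
  ultimately have "integrable lborel (\<lambda>z. indicator K z *\<^sub>R (f (fst z) * (real k * snd z ^ (k - 1))))"
    by (rule borel_integrable_compact)
  also have "(\<lambda>z. indicator K z *\<^sub>R (f (fst z) * (real k * snd z ^ (k - 1)))) = case_prod h"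
    by (auto simp: h_def K_def indicator_def fun_eq_iff)
  finally have "integrable (lborel \<Otimes>\<^sub>M lborel) (case_prod h)"
    unfolding lborel_prod .
  then have "(\<integral>s. (\<integral>x. h x s \<partial>lborel) \<partial>lborel) = (\<integral>x. (\<integral>s. h x s \<partial>lborel) \<partial>lborel)"
    by (rule lborel_pair.Fubini_integral)
  moreover have "(\<integral>x. h x s \<partial>lborel)
      = indicator {0..1} s * (real k * s ^ (k - 1)) * (\<integral>x. indicator (cball 0 s) x * f x \<partial>lborel)" for s
    unfolding h_def by (subst integral_mult_right_zero[symmetric]) (simp add: mult_ac)
  moreover have "(\<integral>s. h x s \<partial>lborel) = indicator (cball 0 1) x * f x * (1 - norm x ^ k)" for x
  proof (cases "norm x \<le> 1")
    case True
    then have "h x = (\<lambda>s. f x * (real k * (s ^ (k - 1) * indicator {norm x..1} s)))"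
      by (auto simp: h_def indicator_def fun_eq_iff dest: order_trans[OF norm_ge_zero])
    then show ?thesis
      using True \<open>k > 0\<close> integral_power[OF True, of "k - 1"] by simp
  next
    case False
    then have "h x = (\<lambda>_. 0)" by (auto simp: h_def indicator_def fun_eq_iff)
    then show ?thesis using False by simp
  qed
  ultimately show ?thesis by simp
qed

lemma ball_moment_norm_power:
  fixes \<alpha> :: "'n::finite \<Rightarrow> nat"
  defines "N \<equiv> total_degree \<alpha> + CARD('n)"
  shows "(\<integral>x. indicator (cball 0 1) x * monomial \<alpha> x * norm x ^ (2 * j) \<partial>lborel)
           = real N / (real N + 2 * real j) * ball_moment \<alpha>"
proof (cases "j = 0")
  case True
  have "N > 0" by (simp add: N_def)
  then show ?thesis using True by (simp add: ball_moment_def)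
next
  case False
  have "N > 0" by (simp add: N_def)
  obtain i where j: "j = Suc i" using False by (cases j) auto
  then have i: "2 * j - 1 = Suc (2 * i)" by simp
  let ?k = "2 * j" and ?f = "\<lambda>x::real^'n. indicator (cball 0 1) x * monomial \<alpha> x"
  have "(\<integral>s. indicator {0..1} s * (real ?k * s ^ (?k - 1))
              * (\<integral>x. indicator (cball 0 s) x * monomial \<alpha> x \<partial>lborel) \<partial>lborel)
      = (\<integral>s. real ?k * ball_moment \<alpha> * (s ^ (Suc (2 * i) + N) * indicator {0..1} s) \<partial>lborel)"
  proof (intro Bochner_Integration.integral_cong refl)
    fix s :: real
    show "indicator {0..1} s * (real ?k * s ^ (?k - 1))
            * (\<integral>x. indicator (cball 0 s) x * monomial \<alpha> x \<partial>lborel)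
        = real ?k * ball_moment \<alpha> * (s ^ (Suc (2 * i) + N) * indicator {0..1} s)"
      using integral_cball_monomial[of s \<alpha>] unfolding i
      by (cases "s > 0") (auto simp: N_def indicator_def power_add)
  qed
  also have "\<dots> = real ?k / (real ?k + real N) * ball_moment \<alpha>"
    using integral_power[of 0 1 "Suc (2 * i) + N"] j by simp
  finally have "real ?k / (real ?k + real N) * ball_moment \<alpha>
      = (\<integral>x. ?f x - ?f x * norm x ^ ?k \<partial>lborel)"
    using integral_cball_layers[of "monomial \<alpha>" ?k] False
    by (simp add: continuous_intros algebra_simps)
  also have "\<dots> = ball_moment \<alpha> - (\<integral>x. ?f x * norm x ^ ?k \<partial>lborel)"
    by (subst Bochner_Integration.integral_diff)
      (simp_all add: ball_moment_def integrable_indicator_cball continuous_intros mult.assoc)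
  finally show ?thesis
    using \<open>N > 0\<close> by (simp add: field_simps)
qed

section \<open>A reproducing kernel on the unit ball\<close>

lemma unit_ball_vol_neq_0: "unit_ball_vol (real n) \<noteq> 0"
  using unit_ball_vol_pos[of "real n"] by linarith

definition ball_kernel :: "nat \<Rightarrow> real^'n::finite \<Rightarrow> real" where
  "ball_kernel m z = (\<Sum>j\<le>m. kernel_coeff (real CARD('n) / 2) m j * norm z ^ (2 * j))
                       / unit_ball_vol (real CARD('n))"

lemma continuous_on_ball_kernel [continuous_intros]: "continuous_on S (ball_kernel m)"
  unfolding ball_kernel_def by (intro continuous_intros) (simp add: unit_ball_vol_neq_0)

lemma poly_fun_ball_kernel: "poly_fun (2 * m) (ball_kernel m :: real^'n::finite \<Rightarrow> real)"
proof -
  have "poly_fun (2 * m) (\<lambda>z::real^'n. kernel_coeff (real CARD('n) / 2) m j / unit_ball_vol (real CARD('n))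
                                        * norm z ^ (2 * j))" if "j \<le> m" for j
    using that by (intro poly_fun_cmult poly_fun_mono[OF poly_fun_norm_power]) simp
  then show ?thesis
    unfolding ball_kernel_def sum_divide_distrib by (auto intro: poly_fun_sum simp: mult_ac)
qed

lemma ball_kernel_0: "ball_kernel m (0 :: real^'n::finite)
    = (pochhammer (real CARD('n) / 2 + 1) m / fact m)^2 / unit_ball_vol (real CARD('n))"
proof -
  have "(\<Sum>j\<le>m. kernel_coeff (real CARD('n) / 2) m j * (0::real) ^ (2 * j))
      = kernel_coeff (real CARD('n) / 2) m 0"
    by (subst sum.atMost_shift) simp
  then show ?thesis by (simp add: ball_kernel_def kernel_coeff_0)
qed

lemma ball_kernel_0_pos: "ball_kernel m (0 :: real^'n::finite) > 0"
proof -
  have "pochhammer (real CARD('n) / 2 + 1) m > 0" by (intro pochhammer_pos) simp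
  then show ?thesis by (simp add: ball_kernel_0)
qed

lemma integral_times_ball_kernel:
  fixes f :: "real^'n::finite \<Rightarrow> real"
  assumes "continuous_on (cball 0 1) f"
  shows "(\<integral>z. indicator (cball 0 1) z * f z * ball_kernel m z \<partial>lborel)
     = (\<Sum>j\<le>m. kernel_coeff (real CARD('n) / 2) m j / unit_ball_vol (real CARD('n))
               * (\<integral>z. indicator (cball 0 1) z * f z * norm z ^ (2 * j) \<partial>lborel))"
proof -
  have "(\<integral>z. indicator (cball 0 1) z * f z * ball_kernel m z \<partial>lborel)
      = (\<integral>z. (\<Sum>j\<le>m. kernel_coeff (real CARD('n) / 2) m j / unit_ball_vol (real CARD('n))
               * (indicator (cball 0 1) z * f z * norm z ^ (2 * j))) \<partial>lborel)"
    by (simp add: ball_kernel_def sum_distrib_left sum_divide_distrib mult_ac)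
  also have "\<dots> = (\<Sum>j\<le>m. kernel_coeff (real CARD('n) / 2) m j / unit_ball_vol (real CARD('n))
               * (\<integral>z. indicator (cball 0 1) z * f z * norm z ^ (2 * j) \<partial>lborel))"
    using integrable_indicator_cball[of 0 1 "\<lambda>z. f z * norm z ^ _"]
    by (subst Bochner_Integration.integral_sum)
      (simp_all add: assms continuous_intros mult.assoc)
  finally show ?thesis .
qed

lemma integral_monomial_times_ball_kernel:
  fixes \<alpha> :: "'n::finite \<Rightarrow> nat"
  assumes "total_degree \<alpha> \<le> 2 * m + 1"
  shows "(\<integral>z. indicator (cball 0 1) z * monomial \<alpha> z * ball_kernel m z \<partial>lborel)
           = (if \<alpha> = (\<lambda>_. 0) then 1 else 0)"
proof (cases "even (total_degree \<alpha>)")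
  case False
  then have "ball_moment \<alpha> = 0" "\<alpha> \<noteq> (\<lambda>_. 0)"
    by (auto simp: ball_moment_odd total_degree_def)
  then show ?thesis
    by (simp add: integral_times_ball_kernel continuous_intros ball_moment_norm_power)
next
  case True
  then obtain i where i: "total_degree \<alpha> = 2 * i" by auto
  let ?q = "real CARD('n) / 2"
  have "i \<le> m" using i assms by simp
  have ratio: "real (total_degree \<alpha> + CARD('n)) / (real (total_degree \<alpha> + CARD('n)) + 2 * real j)
      = (?q + real i) / (?q + real i + real j)" for j
    by (simp add: i divide_simps) (simp add: algebra_simps)
  have "(\<integral>z. indicator (cball 0 1) z * monomial \<alpha> z * ball_kernel m z \<partial>lborel)
      = (\<Sum>j\<le>m. kernel_coeff ?q m j / unit_ball_vol (real CARD('n))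
               * ((?q + real i) / (?q + real i + real j) * ball_moment \<alpha>))"
    by (simp only: integral_times_ball_kernel continuous_on_monomial continuous_on_id
        ball_moment_norm_power ratio)
  also have "\<dots> = ball_moment \<alpha> / unit_ball_vol (real CARD('n))
        * (\<Sum>j\<le>m. kernel_coeff ?q m j * ((?q + real i) / (?q + real i + real j)))"
    by (simp add: sum_distrib_left mult_ac)
  also have "\<dots> = (if \<alpha> = (\<lambda>_. 0) then 1 else 0)"
    using kernel_coeff_sum[of ?q i m] \<open>i \<le> m\<close> i
    by (auto simp: total_degree_eq_0_iff ball_moment_0 total_degree_def unit_ball_vol_neq_0)
  finally show ?thesis .
qed

lemma integral_poly_fun_times_ball_kernel:
  "poly_fun (2 * m + 1) F \<Longrightarrow>
     (\<integral>z. indicator (cball 0 1) z * F z * ball_kernel m z \<partial>lborel) = F 0"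
proof (induction rule: poly_fun.induct)
  case (monomial \<alpha> c)
  have "(\<integral>z. indicator (cball 0 1) z * (c * monomial \<alpha> z) * ball_kernel m z \<partial>lborel)
      = c * (\<integral>z. indicator (cball 0 1) z * monomial \<alpha> z * ball_kernel m z \<partial>lborel)"
    by (subst integral_mult_right_zero[symmetric]) (simp add: mult_ac)
  then show ?case
    using integral_monomial_times_ball_kernel[OF monomial] by (simp add: monomial_at_0)
next
  case (add F G)
  have integrable: "integrable lborel (\<lambda>z. indicator (cball 0 1) z * H z * ball_kernel m z)"
    if "poly_fun (2 * m + 1) H" for H
    using integrable_indicator_cball[of 0 1 "\<lambda>z. H z * ball_kernel m z"] that
    by (simp add: continuous_on_poly_fun continuous_intros mult.assoc)
  have "(\<integral>z. indicator (cball 0 1) z * (F z + G z) * ball_kernel m z \<partial>lborel)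
      = (\<integral>z. indicator (cball 0 1) z * F z * ball_kernel m z
             + indicator (cball 0 1) z * G z * ball_kernel m z \<partial>lborel)"
    by (simp add: algebra_simps)
  also have "\<dots> = F 0 + G 0"
    using add.IH integrable[OF add.hyps(1)] integrable[OF add.hyps(2)] by simp
  finally show ?case .
qed

lemma integral_ball_kernel_square:
  "(\<integral>z. indicator (cball 0 1) z * (ball_kernel m (z :: real^'n::finite))^2 \<partial>lborel)
     = ball_kernel m (0 :: real^'n)"
proof -
  have "poly_fun (2 * m + 1) (ball_kernel m :: real^'n \<Rightarrow> real)"
    by (rule poly_fun_mono[OF poly_fun_ball_kernel]) simp
  from integral_poly_fun_times_ball_kernel[OF this] show ?thesis
    by (simp add: power2_eq_square mult.assoc)
qed

lemma integral_cball_square_ge: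
  fixes F :: "real^'n::finite \<Rightarrow> real"
  assumes F: "poly_fun (2 * m + 1) F" and "F 0 = 1"
  shows "(\<integral>z. indicator (cball 0 1) z * (F z)^2 \<partial>lborel) \<ge> 1 / ball_kernel m (0 :: real^'n)"
proof -
  let ?B = "cball (0::real^'n) 1" and ?K = "ball_kernel m :: real^'n \<Rightarrow> real"
  define t where "t = 1 / ?K 0"
  have "continuous_on ?B F" using F by (rule continuous_on_poly_fun)
  then have integrable: "integrable lborel (\<lambda>z. indicator ?B z * (F z)^2)"
    "integrable lborel (\<lambda>z. indicator ?B z * (F z * ?K z))"
    "integrable lborel (\<lambda>z. indicator ?B z * (?K z)^2)"
    by (auto intro!: integrable_indicator_cball continuous_intros)
  have "0 \<le> (\<integral>z. indicator ?B z * (F z - t * ?K z)^2 \<partial>lborel)"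
    by (intro Bochner_Integration.integral_nonneg) simp
  also have "\<dots> = (\<integral>z. indicator ?B z * (F z)^2 + t^2 * (indicator ?B z * (?K z)^2)
             - 2 * t * (indicator ?B z * (F z * ?K z)) \<partial>lborel)"
    by (simp add: power2_diff algebra_simps)
  also have "\<dots> = (\<integral>z. indicator ?B z * (F z)^2 \<partial>lborel)
        - 2 * t * (\<integral>z. indicator ?B z * F z * ?K z \<partial>lborel)
        + t^2 * (\<integral>z. indicator ?B z * (?K z)^2 \<partial>lborel)"
    using integrable by (simp add: mult.assoc)
  also have "\<dots> = (\<integral>z. indicator ?B z * (F z)^2 \<partial>lborel) - t"
    unfolding integral_ball_kernel_square
    using integral_poly_fun_times_ball_kernel[OF F] \<open>F 0 = 1\<close> ball_kernel_0_pos[of m, where 'n='n]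
    by (simp add: t_def power2_eq_square)
  finally show ?thesis by (simp add: t_def)
qed

section \<open>Comparison of the two bounds\<close>

text \<open>\<open>s(d) / K(0)\<close> for the kernel \<open>K = ball_kernel (d div 2)\<close> in dimension \<open>p\<close>
  (cf. \<open>ball_kernel_0\<close>): the bound obtained on the unit ball.\<close>
definition ball_bound :: "nat \<Rightarrow> nat \<Rightarrow> real" where
  "ball_bound d p = real (p + d choose d) * unit_ball_vol (real p)
                      / (pochhammer (real p / 2 + 1) (d div 2) / fact (d div 2))^2"

definition omega_bound :: "nat \<Rightarrow> nat \<Rightarrow> real" where
  "omega_bound d p = omega p * (real ((d + 1) * (d + 2) * (d + 3))
                                  / real ((d + p + 1) * (d + p + 2) * (2 * d + p + 6)))"

lemma Gamma_plus_1_pos: "x > 0 \<Longrightarrow> Gamma (x + 1) = x * Gamma (x :: real)"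
  by (intro Gamma_plus1) (auto dest: nonpos_Ints_nonpos)

lemma Gamma_three_halves: "Gamma (3/2 :: real) = sqrt pi / 2"
  using Gamma_plus_1_pos[of "1/2"] by (simp add: Gamma_one_half_real)

lemma unit_ball_vol_add_two:
  "unit_ball_vol (real (p + 2)) = unit_ball_vol (real p) * pi / (real p / 2 + 1)"
proof -
  let ?x = "real p / 2 + 1"
  have x: "real (p + 2) / 2 = ?x" by simp
  have Gamma: "Gamma (?x + 1) = ?x * Gamma ?x"
    by (rule Gamma_plus_1_pos) simp
  have powr: "pi powr ?x = pi powr (real p / 2) * pi"
    by (simp add: powr_add)
  show ?thesis
    unfolding unit_ball_vol_def x Gamma powr by simp
qed

lemma omega_add_two: "omega (p + 2) = omega p * pi / ((real p + 1) / 2)"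
proof -
  let ?x = "(real p + 1) / 2"
  have x: "(real (p + 2) + 1) / 2 = ?x + 1" by simp
  have Gamma: "Gamma (?x + 1) = ?x * Gamma ?x"
    by (rule Gamma_plus_1_pos) simp
  have powr: "pi powr (?x + 1) = pi powr ?x * pi"
    by (simp add: powr_add)
  show ?thesis
    unfolding omega_def x Gamma powr by simp
qed

lemma binomial_add_two:
  "real (p + 2 + d choose d)
     = real (p + d choose d) * real (p + d + 1) * real (p + d + 2) / (real (p + 1) * real (p + 2))"
proof -
  have "(fact (p + 2 + d) :: real) = fact (p + d) * real (p + d + 1) * real (p + d + 2)"
    "(fact (p + 2) :: real) = fact p * real (p + 1) * real (p + 2)"
    by (simp_all add: algebra_simps del: of_nat_Suc)
  then show ?thesis
    by (simp add: binomial_fact field_simps del: of_nat_add)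
qed

lemma pochhammer_plus_1:
  fixes a :: real
  assumes "a > 0"
  shows "pochhammer (a + 1) m = pochhammer a m * (a + real m) / a"
proof -
  have "a * pochhammer (a + 1) m = pochhammer a m * (a + real m)"
    by (metis pochhammer_rec pochhammer_Suc)
  then show ?thesis using assms by (simp add: field_simps)
qed

lemma ball_bound_add_two:
  "ball_bound d (p + 2)
     = ball_bound d p * (2 * pi * real (p + d + 1) * real (p + d + 2) / real (p + 1))
       / (real p + 2 + 2 * real (d div 2))^2"
proof -
  let ?m = "d div 2" and ?a = "real p / 2 + 1"
  have field_identity:
    "b * A * B / (c * e) * (V * pi / a) / (P * y / a / F)^2
       = b * V / (P / F)^2 * (2 * pi * A * B / c) / (2 * y)^2"
    if "e = 2 * a" "a \<noteq> 0" "y \<noteq> 0" "c \<noteq> 0" "F \<noteq> 0" "P \<noteq> 0" for a e y b A B c V P F :: real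
    using that by (simp add: field_simps power2_eq_square)
  have a: "real (p + 2) / 2 + 1 = ?a + 1" and "?a > 0" by simp_all
  have "pochhammer ?a ?m > 0" by (intro pochhammer_pos) simp
  have "ball_bound d (p + 2) = real (p + 2 + d choose d) * unit_ball_vol (real (p + 2))
          / (pochhammer (?a + 1) ?m / fact ?m)^2"
    unfolding ball_bound_def a ..
  also have "\<dots> = real (p + d choose d) * real (p + d + 1) * real (p + d + 2) / (real (p + 1) * real (p + 2))
          * (unit_ball_vol (real p) * pi / ?a) / (pochhammer ?a ?m * (?a + real ?m) / ?a / fact ?m)^2"
    unfolding binomial_add_two unit_ball_vol_add_two pochhammer_plus_1[OF \<open>?a > 0\<close>] ..
  also have "\<dots> = ball_bound d p * (2 * pi * real (p + d + 1) * real (p + d + 2) / real (p + 1))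
          / (2 * (?a + real ?m))^2"
    unfolding ball_bound_def using \<open>pochhammer ?a ?m > 0\<close> by (subst field_identity) auto
  finally show ?thesis by (simp add: add_ac)
qed

lemma omega_bound_add_two:
  "omega_bound d (p + 2)
     = omega_bound d p * (2 * pi * real (p + d + 1) * real (p + d + 2) / real (p + 1))
       * real (2 * d + p + 6) / (real (d + p + 3) * real (d + p + 4) * real (2 * d + p + 8))"
proof -
  have field_identity:
    "w * pi / (k / 2) * (N / Z) = w * (N / (A * Y)) * (2 * pi * A / k) * (Y / Z)"
    if "A \<noteq> 0" "Y \<noteq> 0" "k \<noteq> 0" for w k N Z A Y :: real
    using that by (simp add: field_simps)
  have "real ((d + (p + 2) + 1) * (d + (p + 2) + 2) * (2 * d + (p + 2) + 6))
      = real (d + p + 3) * real (d + p + 4) * real (2 * d + p + 8)"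
    by (simp add: algebra_simps)
  moreover have "real ((d + p + 1) * (d + p + 2) * (2 * d + p + 6))
      = (real (p + d + 1) * real (p + d + 2)) * real (2 * d + p + 6)"
    by (simp add: algebra_simps)
  ultimately show ?thesis
    unfolding omega_bound_def omega_add_two
    by (subst field_identity[where A = "real (p + d + 1) * real (p + d + 2)" and Y = "real (2 * d + p + 6)"])
      (simp_all add: mult.assoc)
qed

lemma Gamma_three_halves_square_le: "Gamma (real m + 3/2)^2 \<le> Gamma (real m + 1) * Gamma (real m + 2)"
proof -
  let ?x = "real m + 1" and ?y = "real m + 2" and ?z = "real m + 3/2"
  have pos: "Gamma ?z > 0" "Gamma ?x > 0" "Gamma ?y > 0"
    by (intro Gamma_real_pos; simp)+
  then have nonzero: "Gamma ?x \<noteq> 0" "Gamma ?y \<noteq> 0" by linarith+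
  have "(ln \<circ> Gamma) ((1 - 1/2) *\<^sub>R ?x + (1/2) *\<^sub>R ?y)
          \<le> (1 - 1/2) * (ln \<circ> Gamma) ?x + (1/2) * (ln \<circ> Gamma) ?y"
    by (rule convex_onD[OF log_convex_Gamma_real]) auto
  moreover have "(1 - 1/2) *\<^sub>R ?x + (1/2) *\<^sub>R ?y = ?z" by (simp add: field_simps)
  ultimately have "2 * ln (Gamma ?z) \<le> ln (Gamma ?x) + ln (Gamma ?y)" by simp
  then have "ln (Gamma ?z ^ 2) \<le> ln (Gamma ?x * Gamma ?y)"
    by (simp add: ln_realpow ln_mult nonzero)
  then show ?thesis
    using pos by (simp add: ln_le_cancel_iff)
qed

lemma pi_pochhammer_three_halves_square_le:
  "pi * (pochhammer (3/2 :: real) m / fact m)^2 \<le> 4 * (real m + 1)"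
proof -
  have poch: "pochhammer (3/2 :: real) m = Gamma (real m + 3/2) / Gamma (3/2)"
    by (subst pochhammer_Gamma) (auto dest: nonpos_Ints_nonpos simp: add_ac)
  have "pi * (pochhammer (3/2 :: real) m / fact m)^2 = 4 * Gamma (real m + 3/2)^2 / (fact m)^2"
    unfolding poch Gamma_three_halves by (simp add: field_simps power2_eq_square)
  also have "\<dots> \<le> 4 * (Gamma (real m + 1) * Gamma (real m + 2)) / (fact m)^2"
    using Gamma_three_halves_square_le[of m] by (simp add: divide_right_mono)
  also have "Gamma (real m + 1) * Gamma (real m + 2) = (real m + 1) * (fact m)^2"
  proof -
    have "Gamma (real m + 1) = fact m"
      using Gamma_fact[of m] by (simp add: add_ac)
    moreover have "Gamma (real m + 1 + 1) = (real m + 1) * Gamma (real m + 1)"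
      by (rule Gamma_plus_1_pos) simp
    ultimately show ?thesis by (simp add: power2_eq_square add.assoc)
  qed
  finally show ?thesis by simp
qed

lemma omega_bound_le_ball_bound_1: "omega_bound d 1 \<le> ball_bound d 1"
proof -
  let ?B = "pochhammer (3/2 :: real) (d div 2) / fact (d div 2)"
  have "pi * ?B^2 / real (2 * d + 7) \<le> 1"
    using pi_pochhammer_three_halves_square_le[of "d div 2"] by simp
  have "pochhammer (3/2 :: real) (d div 2) > 0" by (simp add: pochhammer_pos)
  then have "2 * pi * real (d + 1) / real (2 * d + 7)
      = 2 * real (d + 1) / ?B^2 * (pi * ?B^2 / real (2 * d + 7))"
    using times_divide_times_eq[of "2 * real (d + 1)" "?B^2" "pi * ?B^2" "real (2 * d + 7)"]
    by (simp add: mult_ac)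
  also have "\<dots> \<le> 2 * real (d + 1) / ?B^2"
    using \<open>pi * ?B^2 / real (2 * d + 7) \<le> 1\<close> by (intro mult_left_le) simp_all
  finally have "2 * pi * real (d + 1) / real (2 * d + 7) \<le> 2 * real (d + 1) / ?B^2" .
  moreover have "omega_bound d 1 = 2 * pi * real (d + 1) / real (2 * d + 7)"
  proof -
    have "real ((d + 1) * (d + 2) * (d + 3)) / real ((d + 1 + 1) * (d + 1 + 2) * (2 * d + 1 + 6))
        = real (d + 1) * real ((d + 2) * (d + 3)) / (real (2 * d + 7) * real ((d + 2) * (d + 3)))"
      by (simp only: of_nat_mult[symmetric]) (simp add: algebra_simps)
    also have "\<dots> = real (d + 1) / real (2 * d + 7)"
      by (rule mult_divide_mult_cancel_right) (simp only: of_nat_eq_0_iff mult_is_0, simp)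
    finally show ?thesis by (simp add: omega_bound_def omega_def)
  qed
  moreover have "ball_bound d 1 = 2 * real (d + 1) / ?B^2"
    by (simp add: ball_bound_def)
  ultimately show ?thesis by simp
qed

lemma omega_2: "omega 2 = 4 * pi"
proof -
  have "pi powr (3/2) = pi * sqrt pi"
    using powr_add[of pi 1 "1/2"] by (simp add: powr_half_sqrt)
  then show ?thesis by (simp add: omega_def Gamma_three_halves)
qed

lemma omega_bound_le_ball_bound_2: "omega_bound d 2 \<le> ball_bound d 2"
proof -
  let ?m = "d div 2" and ?c = "pi * real (d + 1) * real (d + 2)"
  have "omega_bound d 2 = ?c * (2 / real (d + 4)^2)"
  proof -
    have "real ((d + 1) * (d + 2) * (d + 3)) / real ((d + 2 + 1) * (d + 2 + 2) * (2 * d + 2 + 6))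
        = real (d + 1) * real (d + 2) * real (d + 3) / (2 * real (d + 4)^2 * real (d + 3))"
      by (simp only: of_nat_mult[symmetric] of_nat_power[symmetric]) (simp add: power2_eq_square algebra_simps)
    also have "\<dots> = real (d + 1) * real (d + 2) / (2 * real (d + 4)^2)"
      by (rule mult_divide_mult_cancel_right) simp
    finally show ?thesis by (simp add: omega_bound_def omega_2)
  qed
  also have "\<dots> \<le> ?c * (1 / (2 * (real ?m + 1)^2))"
  proof (intro mult_left_mono)
    have "real (2 * ?m + 2) \<le> real (d + 4)" by (simp only: of_nat_le_iff)
    then have "2 * (real ?m + 1) \<le> real (d + 4)" by simp
    then have "(2 * (real ?m + 1))^2 \<le> real (d + 4)^2"
      by (rule power_mono) simp
    moreover have "(2 * (real ?m + 1))^2 = 4 * (real ?m + 1)^2"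
      by (simp add: power2_eq_square algebra_simps)
    ultimately have "4 * (real ?m + 1)^2 \<le> real (d + 4)^2" by linarith
    then show "2 / real (d + 4)^2 \<le> 1 / (2 * (real ?m + 1)^2)"
      by (simp add: divide_simps)
  qed simp
  also have "\<dots> = ball_bound d 2"
  proof -
    have "pochhammer (2 :: real) ?m = fact ?m * (real ?m + 1)"
      using pochhammer_plus_1[of 1 ?m] by (simp add: pochhammer_fact)
    then have poch: "pochhammer (real 2 / 2 + 1) ?m / fact ?m = real ?m + 1" by simp
    have binomial: "real (2 + d choose d) = real (d + 1) * real (d + 2) / 2"
      by (simp add: binomial_fact fact_Suc del: of_nat_Suc)
    show ?thesis
      unfolding ball_bound_def poch binomial by (simp add: unit_ball_vol_2)
  qed
  finally show ?thesis .
qed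

lemma omega_bound_le_ball_bound_add_two:
  assumes "omega_bound d p \<le> ball_bound d p"
  shows "omega_bound d (p + 2) \<le> ball_bound d (p + 2)"
proof -
  let ?c = "2 * pi * real (p + d + 1) * real (p + d + 2) / real (p + 1)"
  let ?X = "(real p + 2 + 2 * real (d div 2))^2"
  let ?Y = "real (2 * d + p + 6)" and ?Z = "real (d + p + 3) * real (d + p + 4) * real (2 * d + p + 8)"
  have "(p + 2 + 2 * (d div 2))^2 \<le> (d + p + 3)^2"
    by (rule power_mono) simp_all
  also have "\<dots> \<le> (d + p + 3) * (d + p + 4)"
    by (simp add: power2_eq_square)
  finally have "(p + 2 + 2 * (d div 2))^2 * (2 * d + p + 6)
      \<le> (d + p + 3) * (d + p + 4) * (2 * d + p + 8)"
    by (intro mult_mono) simp_all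
  then have "?X * ?Y \<le> ?Z"
    by (simp only: of_nat_le_iff[symmetric, where 'a = real]) (simp add: add_ac)
  then have "?Y / ?Z \<le> 1 / ?X"
    by (simp add: divide_simps mult_ac)
  have "omega_bound d (p + 2) = omega_bound d p * (?c * (?Y / ?Z))"
    unfolding omega_bound_add_two by simp
  also have "\<dots> \<le> ball_bound d p * (?c * (?Y / ?Z))"
    by (rule mult_right_mono[OF assms]) simp
  also have "\<dots> \<le> ball_bound d p * (?c * (1 / ?X))"
    using \<open>?Y / ?Z \<le> 1 / ?X\<close> by (intro mult_left_mono) (simp_all add: ball_bound_def)
  also have "\<dots> = ball_bound d (p + 2)"
    unfolding ball_bound_add_two by simp
  finally show ?thesis .
qed

lemma omega_bound_le_ball_bound:
  assumes "p \<ge> 1"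
  shows "omega_bound d p \<le> ball_bound d p"
proof -
  have "omega_bound d (k + 1) \<le> ball_bound d (k + 1) \<and>
        omega_bound d (k + 2) \<le> ball_bound d (k + 2)" for k
  proof (induction k)
    case 0
    show ?case
      using omega_bound_le_ball_bound_1 omega_bound_le_ball_bound_2 unfolding add_0 by blast
  next
    case (Suc k)
    then show ?case
      using omega_bound_le_ball_bound_add_two[of d "k + 1"] by (simp add: add_ac)
  qed
  then show ?thesis
    using assms by (metis le_add_diff_inverse2)
qed

section \<open>The Christoffel function of a uniform measure\<close>

lemma finite_multi_idx: "finite (multi_idx d :: ('n::finite \<Rightarrow> nat) set)"
proof (rule finite_subset)
  show "multi_idx d \<subseteq> PiE UNIV (\<lambda>_::'n. {..d})"
  proof
    fix \<alpha> :: "'n \<Rightarrow> nat" assume "\<alpha> \<in> multi_idx d"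
    then have "\<alpha> i \<le> d" for i
      using member_le_sum[of i UNIV \<alpha>] by (auto simp: multi_idx_def)
    then show "\<alpha> \<in> PiE UNIV (\<lambda>_. {..d})" by (auto simp: PiE_def extensional_def)
  qed
qed (intro finite_PiE; simp)

lemma const_one_in_polys_deg: "(\<lambda>_. 1) \<in> (polys_deg d :: (real^'n::finite \<Rightarrow> real) set)"
proof -
  let ?c = "\<lambda>\<alpha>::'n \<Rightarrow> nat. if \<alpha> = (\<lambda>_. 0) then 1 else (0::real)"
  have "(\<Sum>\<alpha>\<in>multi_idx d. ?c \<alpha> * (\<Prod>i\<in>UNIV. (x $ i) ^ \<alpha> i))
      = (\<Sum>\<alpha>\<in>multi_idx d. if \<alpha> = (\<lambda>_::'n. 0) then 1 else (0::real))" for x :: "real^'n"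
    by (intro sum.cong refl) simp
  also have "\<dots> = 1"
    using finite_multi_idx[of d, where 'n = 'n] by (simp add: multi_idx_def)
  finally have "(\<Sum>\<alpha>\<in>multi_idx d. ?c \<alpha> * (\<Prod>i\<in>UNIV. (x $ i) ^ \<alpha> i)) = 1" for x :: "real^'n" .
  then show ?thesis unfolding polys_deg_def by (intro CollectI exI[of _ ?c]) (simp add: fun_eq_iff)
qed

lemma christoffel_ge:
  assumes "\<And>P. P \<in> polys_deg d \<Longrightarrow> P \<xi> = 1 \<Longrightarrow> c \<le> (\<integral>x. (P x)^2 \<partial>\<nu>)"
  shows "c \<le> christoffel \<nu> d \<xi>"
  unfolding christoffel_def
proof (rule cInf_greatest)
  show "{\<integral>x. (P x)^2 \<partial>\<nu> |P. P \<in> polys_deg d \<and> P \<xi> = 1} \<noteq> {}"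
    using const_one_in_polys_deg by blast
qed (use assms in blast)

lemma ball_subset_of_infdist_frontier:
  fixes S :: "'a::euclidean_space set"
  assumes "x \<in> S" "\<delta> \<le> infdist x (frontier S)"
  shows "ball x \<delta> \<subseteq> S"
proof
  fix y assume y: "y \<in> ball x \<delta>"
  show "y \<in> S"
  proof (rule ccontr)
    assume "y \<notin> S"
    then have "closed_segment x y \<inter> frontier S \<noteq> {}"
      using \<open>x \<in> S\<close> by (intro connected_Int_frontier) auto
    then obtain z where "z \<in> closed_segment x y" "z \<in> frontier S" by auto
    then have "infdist x (frontier S) \<le> dist x y"
      using infdist_le[of z "frontier S" x] dist_in_closed_segment[of z x y] by (simp add: dist_commute)
    then show False using y assms(2) by simp
  qed
qed

lemma integral_uniform_measure_lborel:
  fixes f :: "'a::euclidean_space \<Rightarrow> real"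
  assumes S: "S \<in> fmeasurable lborel" "measure lborel S > 0"
    and [measurable]: "f \<in> borel_measurable borel"
  shows "(\<integral>x. f x \<partial>uniform_measure lborel S)
           = (\<integral>x. indicator S x * f x \<partial>lborel) / measure lborel S"
proof -
  have [measurable]: "S \<in> sets borel" using S(1) by (simp add: fmeasurable_def)
  have "emeasure lborel S = ennreal (measure lborel S)"
    using S(1) by (simp add: emeasure_eq_ennreal_measure fmeasurable_def less_top[symmetric])
  then have "indicator S x / emeasure lborel S = ennreal (indicator S x / measure lborel S)" for x
    using S(2) divide_ennreal[of 1 "measure lborel S"] by (auto simp: indicator_def)
  then have "uniform_measure lborel S = density lborel (\<lambda>x. ennreal (indicator S x / measure lborel S))"
    by (simp add: uniform_measure_def)
  then show ?thesis
    by (simp add: integral_density divide_simps mult_ac)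
qed

lemma integral_square_ge_rescaled_ball:
  fixes P :: "'a::euclidean_space \<Rightarrow> real"
  assumes "compact S" "cball x \<delta> \<subseteq> S" "\<delta> > 0" "continuous_on UNIV P"
  shows "\<delta> ^ DIM('a) * (\<integral>z. indicator (cball 0 1) z * (P (x + \<delta> *\<^sub>R z))^2 \<partial>lborel)
           \<le> (\<integral>y. indicator S y * (P y)^2 \<partial>lborel)"
proof -
  have P: "continuous_on A (\<lambda>y. (P y)^2)" for A
    using assms(4) by (auto intro: continuous_intros continuous_on_subset)
  have [measurable]: "P \<in> borel_measurable borel"
    using assms(4) by (rule borel_measurable_continuous_onI)
  have "indicator (cball x \<delta>) (x + \<delta> *\<^sub>R z) = (indicator (cball 0 1) z :: real)" for z
    using assms(3) by (simp add: indicator_def dist_norm)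
  then have "\<delta> ^ DIM('a) * (\<integral>z. indicator (cball 0 1) z * (P (x + \<delta> *\<^sub>R z))^2 \<partial>lborel)
      = (\<integral>y. indicator (cball x \<delta>) y * (P y)^2 \<partial>lborel)"
    using assms(3) by (subst lborel_integral_affine[where c = \<delta> and t = x]) simp_all
  also have "\<dots> \<le> (\<integral>y. indicator S y * (P y)^2 \<partial>lborel)"
    using assms(2) borel_integrable_compact[OF assms(1) P] borel_integrable_compact[OF compact_cball P]
    by (intro integral_mono) (auto simp: indicator_def)
  finally show ?thesis .
qed

lemma cball_subset_of_infdist_frontier:
  fixes S :: "'a::euclidean_space set"
  assumes "closed S" "x \<in> S" "\<delta> > 0" "\<delta> \<le> infdist x (frontier S)"
  shows "cball x \<delta> \<subseteq> S"
  using closure_minimal[OF ball_subset_of_infdist_frontier[OF assms(2,4)] assms(1)] assms(3) by simp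

lemma measure_pos_of_cball_subset:
  fixes S :: "'a::euclidean_space set"
  assumes "S \<in> fmeasurable lborel" "cball x \<delta> \<subseteq> S" "\<delta> > 0"
  shows "measure lborel S > 0"
proof -
  have "0 < unit_ball_vol (real DIM('a)) * \<delta> ^ DIM('a)" using assms(3) by simp
  also have "\<dots> = measure lborel (cball x \<delta>)"
    using assms(3) by (simp add: measure_def emeasure_cball)
  also have "\<dots> \<le> measure lborel S"
    using assms(1,2) by (intro measure_mono_fmeasurable) auto
  finally show ?thesis .
qed

lemma integral_square_ge_of_cball_subset:
  fixes S :: "(real^'n::finite) set"
  assumes "compact S" "cball x \<delta> \<subseteq> S" "\<delta> > 0" "P \<in> polys_deg d" "P x = 1"
  shows "\<delta> ^ CARD('n) / ball_kernel (d div 2) (0 :: real^'n)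
           \<le> (\<integral>y. indicator S y * (P y)^2 \<partial>lborel)"
proof -
  have "poly_fun d P" using poly_fun_compose_affine[OF assms(4), of 0 1] by simp
  then have "continuous_on UNIV P" by (rule continuous_on_poly_fun)
  have "poly_fun (2 * (d div 2) + 1) (\<lambda>z::real^'n. P (x + \<delta> *\<^sub>R z))"
    using poly_fun_compose_affine[OF assms(4)] by (rule poly_fun_mono) simp
  then have "1 / ball_kernel (d div 2) (0 :: real^'n)
      \<le> (\<integral>z. indicator (cball 0 1) z * (P (x + \<delta> *\<^sub>R z))^2 \<partial>lborel)"
    using assms(5) by (intro integral_cball_square_ge) simp_all
  then have "\<delta> ^ CARD('n) * (1 / ball_kernel (d div 2) (0 :: real^'n))
      \<le> \<delta> ^ CARD('n) * (\<integral>z. indicator (cball 0 1) z * (P (x + \<delta> *\<^sub>R z))^2 \<partial>lborel)"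
    using assms(3) by (intro mult_left_mono) simp_all
  also have "\<dots> \<le> (\<integral>y. indicator S y * (P y)^2 \<partial>lborel)"
    using integral_square_ge_rescaled_ball[OF assms(1-3) \<open>continuous_on UNIV P\<close>]
    by (simp only: DIM_cart DIM_real mult_1_right)
  finally show ?thesis by simp
qed

lemma christoffel_uniform_measure_ge:
  fixes S :: "(real^'n::finite) set"
  assumes "compact S" "\<delta> > 0" "x \<in> S" "\<delta> \<le> infdist x (frontier S)"
  shows "\<delta> ^ CARD('n) / measure lborel S / ball_kernel (d div 2) (0 :: real^'n)
           \<le> christoffel (uniform_measure lborel S) d x"
proof (rule christoffel_ge)
  have cball: "cball x \<delta> \<subseteq> S"
    using assms by (intro cball_subset_of_infdist_frontier compact_imp_closed)
  have S: "S \<in> fmeasurable lborel" using assms(1) by (rule fmeasurable_compact)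
  have "measure lborel S > 0" using S cball assms(2) by (rule measure_pos_of_cball_subset)
  fix P assume P: "P \<in> polys_deg d" "P x = 1"
  have "continuous_on UNIV P"
    using poly_fun_compose_affine[OF P(1), of 0 1] by (simp add: continuous_on_poly_fun)
  have "\<delta> ^ CARD('n) / measure lborel S / ball_kernel (d div 2) (0 :: real^'n)
      = \<delta> ^ CARD('n) / ball_kernel (d div 2) (0 :: real^'n) / measure lborel S"
    by simp
  also have "\<dots> \<le> (\<integral>y. indicator S y * (P y)^2 \<partial>lborel) / measure lborel S"
    using integral_square_ge_of_cball_subset[OF assms(1) cball assms(2) P] \<open>measure lborel S > 0\<close>
    by (intro divide_right_mono) simp_all
  also have "\<dots> = (\<integral>y. (P y)^2 \<partial>uniform_measure lborel S)"
    using integral_uniform_measure_lborel[OF S \<open>measure lborel S > 0\<close>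
        borel_measurable_continuous_onI[OF continuous_on_power[OF \<open>continuous_on UNIV P\<close>]]]
    by simp
  finally show "\<delta> ^ CARD('n) / measure lborel S / ball_kernel (d div 2) (0 :: real^'n)
      \<le> (\<integral>y. (P y)^2 \<partial>uniform_measure lborel S)" .
qed

theorem lemma6p2:
  fixes S :: "(real^'n::finite) set" and \<delta> :: real and x :: "real^'n" and d :: nat
  assumes "compact S"
    and "closure (interior S) = S"
    and "\<delta> > 0"
    and "x \<in> S"
    and "infdist x (frontier S) \<ge> \<delta>"
  shows "real (CARD('n) + d choose d) * christoffel (uniform_measure lborel S) d x
     \<ge> \<delta> ^ CARD('n) * omega (CARD('n)) / measure lborel S *
        (real ((d+1)*(d+2)*(d+3)) / real ((d + CARD('n) + 1) * (d + CARD('n) + 2) * (2*d + CARD('n) + 6)))"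
proof -
  let ?c = "\<delta> ^ CARD('n) / measure lborel S"
  have "\<delta> ^ CARD('n) * omega (CARD('n)) / measure lborel S *
        (real ((d+1)*(d+2)*(d+3)) / real ((d + CARD('n) + 1) * (d + CARD('n) + 2) * (2*d + CARD('n) + 6)))
      = ?c * omega_bound d CARD('n)"
    by (simp add: omega_bound_def)
  also have "\<dots> \<le> ?c * ball_bound d CARD('n)"
    using assms(3) by (intro mult_left_mono omega_bound_le_ball_bound) simp_all
  also have "\<dots> = real (CARD('n) + d choose d) * (?c / ball_kernel (d div 2) (0 :: real^'n))"
    by (simp add: ball_bound_def ball_kernel_0)
  also have "\<dots> \<le> real (CARD('n) + d choose d) * christoffel (uniform_measure lborel S) d x"
    using christoffel_uniform_measure_ge[OF assms(1,3,4,5)] by (intro mult_left_mono) simp_all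
  finally show ?thesis .
qed

end
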